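(* Let $B$ be an integral domain containing $A$ as a subring, let $f:A\to B$ be $\mathbb{F}_q$-linear, let $d$ be a non-negative integer, and let $\beta$ be a non-negative integer with base-$q$ expansion $\beta=\sum_{i=0}^e\beta_iq^i$ ($0\le\beta_i\le q-1$) such that $l(\beta)<q$. Then, in $\mathrm{Frac}(B)[z]$, $$M_d(f^\beta)(z)=M_d(1)^{1-l(\beta)}\prod_{i=0}^e\left(M_d(f^{q^i})(z)\right)^{\beta_i}.$$
   Context: $q$ is a power of a prime, $A=\mathbb{F}_q[\theta]$, $A_+(d)$ is the set of monic polynomials of degree $d$ in $A$. For a function $g:A\to B$, $M_d(g)(z):=\sum_{b\in A_+(d)} g(b)\prod_{a\in A_+(d)\setminus\{b\}}(z-a)\in B[z]$; $f^{m}$ denotes the function $a\mapsto f(a)^m$ (with $f^0=1$). $M_d(1)$ denotes $M_d$ applied to the constant function $1$; it is the nonzero constant $(-1)^dD_d/L_d\in A$, where $D_d$ is the product of all monic polynomials of degree $d$ and $L_d$ the lcm of all polynomials of degree $d$. $l(\beta):=\sum_i\beta_i$ is the sum of base-$q$ digits. *)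

theory Defs
  imports "HOL-Computational_Algebra.Polynomial" "HOL-Computational_Algebra.Fraction_Field" "HOL-Library.Cardinality"
begin

text \<open>A = F_q[theta] is the type 'a poly with 'a a finite field (q = CARD('a)).
  B is a type 'b of class idom, and iota : A -> B is an injective ring homomorphism
  (the inclusion of A as a subring of B).\<close>

definition monics :: "nat \<Rightarrow> 'a::{finite,field} poly set" where
  "monics d = {p. lead_coeff p = 1 \<and> degree p = d}"

definition Md :: "('a::{finite,field} poly \<Rightarrow> 'b::idom) \<Rightarrow> nat \<Rightarrow> ('a poly \<Rightarrow> 'b) \<Rightarrow> 'b poly" where
  "Md \<iota> d g = (\<Sum>b\<in>monics d. smult (g b) (\<Prod>a\<in>monics d - {b}. [:- \<iota> a, 1:]))"

definition frac_emb :: "'b::idom \<Rightarrow> 'b fract" where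
  "frac_emb x = Fract x 1"

end

theory Submission
  imports Defs
begin

text \<open>Both sides have degree \<open>< q\<^sup>d\<close>: on the right each \<open>M\<^sub>d(f\<^bsup>q\<^sup>i\<^esup>)\<close> has degree at most
  \<open>q\<^sup>d\<^sup>-\<^sup>1\<close> and there are \<open>l(\<beta>) < q\<close> factors. So it suffices to compare them at the \<open>q\<^sup>d\<close> points
  \<open>b \<in> A\<^sub>+(d)\<close>, where \<open>M\<^sub>d(g)(b) = g(b) M\<^sub>d(1)\<close> and the identity collapses to
  \<open>f(b)\<^sup>\<beta> = \<Prod>\<^sub>i (f(b)\<^bsup>q\<^sup>i\<^esup>)\<^bsup>\<beta>\<^sub>i\<^esup>\<close>. The degree bound holds because \<open>f\<^bsup>q\<^sup>i\<^esup>\<close> is again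
  \<open>\<F>\<^sub>q\<close>-linear (Frobenius), and an \<open>\<F>\<^sub>q\<close>-linear function on the affine space \<open>A\<^sub>+(d) \<cong> \<F>\<^sub>q\<^sup>d\<close> is
  interpolated by a polynomial of degree \<open>q\<^sup>d\<^sup>-\<^sup>1\<close>: the \<open>j\<close>-th coordinate of \<open>X\<^sup>d + v\<close> is, up to a
  constant, \<open>\<Prod>\<^sub>w (v - w)\<close> over the hyperplane \<open>{w. coeff w j = 0}\<close>.\<close>

lemma card_field_ge_2: "CARD('a::{finite,field}) \<ge> 2"
proof -
  have "card {0::'a, 1} \<le> CARD('a)" by (intro card_mono) auto
  thus ?thesis by simp
qed

lemma power_card_field:
  fixes x :: "'a::{finite,field}"
  shows "x ^ CARD('a) = x"
proof (cases "x = 0")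
  case False
  let ?U = "UNIV - {0::'a}"
  have "(\<Prod>y\<in>?U. x * y) = (\<Prod>y\<in>?U. y)"
    by (rule prod.reindex_bij_witness[of _ "\<lambda>y. y / x" "\<lambda>y. x * y"]) (use False in auto)
  hence "x ^ card ?U = 1" by (simp add: prod.distrib)
  moreover have "card ?U = CARD('a) - 1" by (simp add: card_Diff_singleton)
  ultimately show ?thesis
    by (metis One_nat_def Suc_pred finite_UNIV_card_ge_0 finite mult.right_neutral power_Suc)
qed (simp add: power_0_left)

lemma power_card_power_field:
  fixes x :: "'a::{finite,field}"
  shows "x ^ (CARD('a) ^ i) = x"
  by (induction i) (simp_all add: power_mult power_card_field flip: power_Suc2 mult.commute)

text \<open>The binomial coefficients of \<open>(1 + X)^q\<close> vanish in \<open>\<F>\<^sub>q\<close> because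
  \<open>(1 + X)^q\<close> and \<open>X^q + 1\<close> have degree \<open>q\<close>, the same leading coefficient, and agree on all
  \<open>q\<close> points of the field.\<close>
lemma binomial_card_field_eq_0:
  assumes "0 < k" "k < CARD('a::{finite,field})"
  shows "(of_nat (CARD('a) choose k) :: 'a) = 0"
proof -
  let ?q = "CARD('a)"
  have eq: "([:1,1:] :: 'a poly) ^ ?q = monom 1 ?q + 1"
  proof (rule poly_eqI_degree_lead_coeff[where n = ?q and A = UNIV])
    show "coeff ([:1,1:] ^ ?q) ?q = coeff (monom 1 ?q + 1 :: 'a poly) ?q"
      using card_field_ge_2[where 'a='a] by (simp add: coeff_linear_power)
    show "degree ([:1,1:] ^ ?q :: 'a poly) \<le> ?q"
      by (metis degree_linear_power order_refl)
    show "degree (monom 1 ?q + 1 :: 'a poly) \<le> ?q"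
      by (metis degree_add_le degree_monom_le degree_1 le0)
  qed (simp_all add: poly_monom power_card_field add.commute)
  have "(of_nat (?q choose k) :: 'a) = coeff (([:1,1:] :: 'a poly) ^ ?q) k"
    using assms coeff_linear_poly_power[of k ?q "1::'a" 1] by simp
  also have "\<dots> = 0" using assms by (simp add: eq)
  finally show ?thesis .
qed

definition polys_below :: "nat \<Rightarrow> 'a::zero poly set" where
  "polys_below d = {p. \<forall>i\<ge>d. coeff p i = 0}"

definition hyperplane :: "nat \<Rightarrow> nat \<Rightarrow> 'a::zero poly set" where
  "hyperplane d j = {w \<in> polys_below d. coeff w j = 0}"

lemma polys_below_0: "polys_below 0 = {0}"
  by (auto simp: polys_below_def intro: poly_eqI)

lemma polys_below_Suc: "polys_below (Suc d) = (\<lambda>(c, v). pCons c v) ` (UNIV \<times> polys_below d)"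
proof (intro equalityI subsetI)
  fix p :: "'a poly"
  assume p: "p \<in> polys_below (Suc d)"
  obtain c v where "p = pCons c v" by (cases p)
  moreover from p this have "v \<in> polys_below d"
    by (auto simp: polys_below_def)
  ultimately show "p \<in> (\<lambda>(c, v). pCons c v) ` (UNIV \<times> polys_below d)" by force
qed (auto simp: polys_below_def coeff_pCons split: nat.splits)

lemma finite_polys_below [simp]: "finite (polys_below d :: 'a::{finite,zero} poly set)"
  and card_polys_below: "card (polys_below d :: 'a::{finite,zero} poly set) = CARD('a) ^ d"
proof -
  have "finite (polys_below d :: 'a poly set) \<and> card (polys_below d :: 'a poly set) = CARD('a) ^ d"
  proof (induction d)
    case (Suc d)
    have "inj_on (\<lambda>(c, v). pCons c v) (UNIV \<times> (polys_below d :: 'a poly set))"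
      by (auto simp: inj_on_def)
    with Suc show ?case
      by (simp add: polys_below_Suc card_image card_cartesian_product)
  qed (simp add: polys_below_0)
  thus "finite (polys_below d :: 'a poly set)" "card (polys_below d :: 'a poly set) = CARD('a) ^ d"
    by simp_all
qed

lemma polys_below_add: "x \<in> polys_below d \<Longrightarrow> y \<in> polys_below d \<Longrightarrow> x + y \<in> polys_below d"
  by (simp add: polys_below_def)

lemma polys_below_diff:
  "x \<in> polys_below d \<Longrightarrow> y \<in> polys_below d \<Longrightarrow> (x :: 'a::ab_group_add poly) - y \<in> polys_below d"
  by (simp add: polys_below_def)

lemma polys_below_smult: "x \<in> polys_below d \<Longrightarrow> smult c x \<in> polys_below d"
  by (simp add: polys_below_def)

lemma polys_below_monom: "j < d \<Longrightarrow> monom c j \<in> polys_below d"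
  by (simp add: polys_below_def)

lemma polys_below_expand:
  fixes v :: "'a::comm_semiring_1 poly"
  assumes "v \<in> polys_below d"
  shows "v = (\<Sum>j<d. smult (coeff v j) (monom 1 j))"
proof (rule poly_eqI)
  fix n
  have "coeff (\<Sum>j<d. smult (coeff v j) (monom 1 j)) n = (if n < d then coeff v n else 0)"
    by (simp add: coeff_sum if_distrib cong: if_cong)
  also have "\<dots> = coeff v n" using assms by (auto simp: polys_below_def)
  finally show "coeff v n = coeff (\<Sum>j<d. smult (coeff v j) (monom 1 j)) n" by simp
qed

lemma monics_eq_translate_polys_below:
  "monics d = (\<lambda>v. monom 1 d + v) ` (polys_below d :: 'a::{finite,field} poly set)"
proof (intro equalityI subsetI)
  fix p :: "'a poly"
  assume "p \<in> monics d"
  hence "p - monom 1 d \<in> polys_below d"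
    by (auto simp: monics_def polys_below_def coeff_eq_0 le_less)
  thus "p \<in> (\<lambda>v. monom 1 d + v) ` polys_below d" by force
next
  fix p :: "'a poly"
  assume "p \<in> (\<lambda>v. monom 1 d + v) ` polys_below d"
  then obtain v where p: "p = monom 1 d + v" and v: "v \<in> polys_below d" by auto
  have lc: "coeff p d = 1" using v by (simp add: p polys_below_def)
  have "degree p \<le> d"
    by (rule degree_le) (use v in \<open>auto simp: p polys_below_def\<close>)
  moreover have "d \<le> degree p" using lc by (intro le_degree) simp
  ultimately show "p \<in> monics d" using lc by (simp add: monics_def)
qed

lemma finite_monics [simp]: "finite (monics d :: 'a::{finite,field} poly set)"
  by (simp add: monics_eq_translate_polys_below)

lemma card_monics: "card (monics d :: 'a::{finite,field} poly set) = CARD('a) ^ d"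
  by (simp add: monics_eq_translate_polys_below card_image card_polys_below)

lemma finite_hyperplane [simp]: "finite (hyperplane d j :: 'a::{finite,zero} poly set)"
  by (simp add: hyperplane_def)

lemma card_hyperplane:
  assumes "j < d"
  shows "card (hyperplane d j :: 'a::{finite,field} poly set) = CARD('a) ^ (d - 1)"
proof -
  let ?e = "monom 1 j :: 'a poly"
  have "bij_betw (\<lambda>(c, w). smult c ?e + w) (UNIV \<times> hyperplane d j) (polys_below d)"
    by (rule bij_betw_byWitness[where f' = "\<lambda>p. (coeff p j, p - smult (coeff p j) ?e)"])
       (use assms in \<open>auto simp: hyperplane_def
          intro!: polys_below_add polys_below_diff polys_below_smult polys_below_monom\<close>)
  hence "CARD('a) * card (hyperplane d j :: 'a poly set) = CARD('a) ^ d"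
    by (metis bij_betw_same_card card_UNIV card_cartesian_product card_polys_below)
  also have "\<dots> = CARD('a) * CARD('a) ^ (d - 1)"
    using assms by (simp flip: power_Suc)
  finally show ?thesis by simp
qed

definition hyperplane_prod :: "nat \<Rightarrow> nat \<Rightarrow> 'a::{finite,field} poly" where
  "hyperplane_prod d j = (\<Prod>w\<in>hyperplane d j. monom 1 j - w)"

lemma hyperplane_prod_nonzero: "hyperplane_prod d j \<noteq> 0"
proof -
  have "coeff (monom 1 j - w) j \<noteq> 0" if "w \<in> hyperplane d j" for w :: "'a::{finite,field} poly"
    using that by (simp add: hyperplane_def)
  thus ?thesis by (auto simp: hyperplane_prod_def hyperplane_def)
qed

text \<open>Subtracting from \<open>v\<close> its component in the hyperplane, and then scaling by \<open>coeff v j \<noteq> 0\<close>,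
  both permute the hyperplane; the scaling leaves the factor \<open>(coeff v j)\<^bsup>q\<^sup>d\<^sup>-\<^sup>1\<^esup> = coeff v j\<close>.\<close>
lemma prod_diff_hyperplane:
  fixes v :: "'a::{finite,field} poly"
  assumes j: "j < d" and v: "v \<in> polys_below d"
  shows "(\<Prod>w\<in>hyperplane d j. v - w) = [:coeff v j:] * hyperplane_prod d j"
proof -
  let ?H = "hyperplane d j :: 'a poly set"
  define x where "x = coeff v j"
  define e :: "'a poly" where "e = monom 1 j"
  define u where "u = v - smult x e"
  have u: "u \<in> ?H"
    using v j by (auto simp: u_def hyperplane_def x_def e_def
        intro!: polys_below_diff polys_below_smult polys_below_monom)
  have "(\<Prod>w\<in>?H. v - w) = (\<Prod>w\<in>?H. smult x e - w)"
    by (rule prod.reindex_bij_witness[of _ "\<lambda>w. w + u" "\<lambda>w. w - u"])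
       (use u in \<open>auto simp: u_def hyperplane_def intro: polys_below_add polys_below_diff\<close>)
  also have "\<dots> = [:x:] * hyperplane_prod d j"
  proof (cases "x = 0")
    case True
    have "0 \<in> ?H" by (simp add: hyperplane_def polys_below_def)
    with True show ?thesis by (auto intro!: prod_zero)
  next
    case False
    have "(\<Prod>w\<in>?H. smult x e - w) = (\<Prod>w\<in>?H. smult x e - smult x w)"
      by (rule prod.reindex_bij_witness[of _ "smult x" "smult (inverse x)"])
         (use False in \<open>auto simp: hyperplane_def intro: polys_below_smult\<close>)
    also have "\<dots> = [:x:] ^ card ?H * hyperplane_prod d j"
      by (simp add: hyperplane_prod_def e_def prod_smult poly_const_pow flip: smult_diff_right)
    also have "[:x:] ^ card ?H = [:x:]"
      using j by (simp add: card_hyperplane poly_const_pow power_card_power_field)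
    finally show ?thesis .
  qed
  finally show ?thesis by (simp add: x_def)
qed

locale Fq_embedding =
  fixes \<kappa> :: "'a::{finite,field} poly \<Rightarrow> 'b::idom"
  assumes hom_add: "\<kappa> (x + y) = \<kappa> x + \<kappa> y"
    and hom_mult: "\<kappa> (x * y) = \<kappa> x * \<kappa> y"
    and hom_one: "\<kappa> 1 = 1"
    and inj: "inj \<kappa>"
begin

lemma hom_zero [simp]: "\<kappa> 0 = 0"
  using hom_add[of 0 0] by (metis add.right_neutral add_left_cancel)

lemma hom_diff: "\<kappa> (x - y) = \<kappa> x - \<kappa> y"
  using hom_add[of "x - y" y] by (simp add: algebra_simps)

lemma hom_eq_0_iff [simp]: "\<kappa> x = 0 \<longleftrightarrow> x = 0"
  using inj hom_zero by (metis injD)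

lemma hom_prod: "\<kappa> (prod g F) = (\<Prod>x\<in>F. \<kappa> (g x))"
  by (induction F rule: infinite_finite_induct) (simp_all add: hom_one hom_mult)

lemma hom_power: "\<kappa> (x ^ n) = \<kappa> x ^ n"
  by (induction n) (simp_all add: hom_one hom_mult)

lemma hom_of_nat: "\<kappa> (of_nat n) = of_nat n"
  by (induction n) (simp_all add: hom_one hom_add)

lemma power_card_power_const: "\<kappa> [:c:] ^ (CARD('a) ^ i) = \<kappa> [:c:]"
  by (simp add: power_card_power_field poly_const_pow flip: hom_power)

lemma frobenius: "(x + y :: 'b) ^ CARD('a) = x ^ CARD('a) + y ^ CARD('a)"
proof -
  let ?q = "CARD('a)"
  let ?t = "\<lambda>k. of_nat (?q choose k) * x ^ k * y ^ (?q - k) :: 'b"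
  have "?t k = 0" if "0 < k" "k < ?q" for k
  proof -
    have "(of_nat (?q choose k) :: 'b) = \<kappa> [:of_nat (?q choose k):]"
      by (simp add: hom_of_nat flip: of_nat_poly)
    thus ?thesis using binomial_card_field_eq_0[OF that] by simp
  qed
  hence "(\<Sum>k\<le>?q. ?t k) = (\<Sum>k\<in>{0, ?q}. ?t k)"
    by (intro sum.mono_neutral_right) auto
  thus ?thesis using card_field_ge_2[where 'a='a] by (simp add: binomial_ring)
qed

lemma frobenius_power: "(x + y :: 'b) ^ (CARD('a) ^ i) = x ^ (CARD('a) ^ i) + y ^ (CARD('a) ^ i)"
  by (induction i arbitrary: x y) (simp_all add: power_mult frobenius)

definition Fq_linear :: "('a poly \<Rightarrow> 'b) \<Rightarrow> bool" where
  "Fq_linear h \<longleftrightarrow> (\<forall>x y. h (x + y) = h x + h y) \<and> (\<forall>c x. h (smult c x) = \<kappa> [:c:] * h x)"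

lemma Fq_linear_power_card_power:
  "Fq_linear h \<Longrightarrow> Fq_linear (\<lambda>a. h a ^ (CARD('a) ^ i))"
  by (simp add: Fq_linear_def frobenius_power power_mult_distrib power_card_power_const)

lemma Fq_linear_expand:
  assumes "Fq_linear h" and "v \<in> polys_below d"
  shows "h v = (\<Sum>j<d. \<kappa> [:coeff v j:] * h (monom 1 j))"
proof -
  have h_add: "h (x + y) = h x + h y" for x y using assms(1) by (simp add: Fq_linear_def)
  hence "h 0 = 0" by (metis add.right_neutral add_left_cancel)
  hence "h (sum g F) = (\<Sum>x\<in>F. h (g x))" for g :: "nat \<Rightarrow> 'a poly" and F
    by (induction F rule: infinite_finite_induct) (simp_all add: h_add)
  then show ?thesis
    using assms by (subst polys_below_expand[OF assms(2)]) (simp add: Fq_linear_def)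
qed

end

definition prod_nonzero_below :: "nat \<Rightarrow> 'a::{finite,field} poly" where
  "prod_nonzero_below d = (\<Prod>w\<in>polys_below d - {0}. w)"

lemma prod_nonzero_below_nonzero: "prod_nonzero_below d \<noteq> 0"
  by (simp add: prod_nonzero_below_def)

lemma prod_diff_monics:
  assumes b: "b \<in> monics d"
  shows "(\<Prod>a\<in>monics d - {b}. b - a) = prod_nonzero_below d"
proof -
  from b obtain v where v: "v \<in> polys_below d" and bv: "b = monom 1 d + v"
    by (auto simp: monics_eq_translate_polys_below)
  have "(\<lambda>a. b - a) ` (monics d - {b}) = polys_below d - {0}"
  proof (intro equalityI subsetI)
    fix w
    assume "w \<in> (\<lambda>a. b - a) ` (monics d - {b})"
    then obtain a where a: "a \<in> monics d" "a \<noteq> b" "w = b - a" by auto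
    then obtain u where "u \<in> polys_below d" "w = v - u"
      by (auto simp: monics_eq_translate_polys_below bv)
    with a v show "w \<in> polys_below d - {0}" by (metis polys_below_diff right_minus_eq DiffI singletonD)
  next
    fix w :: "'a poly"
    assume w: "w \<in> polys_below d - {0}"
    have "b - w = monom 1 d + (v - w)" by (simp add: bv)
    hence "b - w \<in> monics d - {b}"
      using v w by (auto simp: monics_eq_translate_polys_below intro: polys_below_diff)
    thus "w \<in> (\<lambda>a. b - a) ` (monics d - {b})" by (intro image_eqI[of _ _ "b - w"]) simp_all
  qed
  moreover have "inj_on (\<lambda>a. b - a) (monics d - {b})" by (auto simp: inj_on_def)
  ultimately show ?thesis
    using prod.reindex[of "\<lambda>a. b - a" "monics d - {b}" "\<lambda>w. w"]
    by (simp add: prod_nonzero_below_def)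
qed

context Fq_embedding
begin

lemma Md_eval:
  assumes b: "b \<in> monics d"
  shows "poly (Md \<kappa> d g) (\<kappa> b) = g b * \<kappa> (prod_nonzero_below d)"
proof -
  have "poly (Md \<kappa> d g) (\<kappa> b) = (\<Sum>b'\<in>monics d. g b' * (\<Prod>a\<in>monics d - {b'}. \<kappa> (b - a)))"
    by (simp add: Md_def poly_sum poly_prod hom_diff)
  also have "\<dots> = (\<Sum>b'\<in>monics d. if b' = b then g b * \<kappa> (\<Prod>a\<in>monics d - {b}. b - a) else 0)"
    using b by (intro sum.cong) (auto simp: hom_prod intro!: prod_zero)
  also have "\<dots> = g b * \<kappa> (prod_nonzero_below d)"
    using b by (simp add: prod_diff_monics)
  finally show ?thesis .
qed

lemma card_image_monics: "card (\<kappa> ` monics d) = CARD('a) ^ d"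
  by (simp add: card_image inj_on_subset[OF inj] card_monics)

lemma Md_degree: "degree (Md \<kappa> d g) < CARD('a) ^ d"
proof -
  have "degree (Md \<kappa> d g) \<le> card (monics d :: 'a poly set) - 1"
    unfolding Md_def
  proof (intro degree_sum_le[OF finite_monics] order.trans[OF degree_smult_le])
    fix b :: "'a poly"
    assume "b \<in> monics d"
    have "degree (\<Prod>a\<in>monics d - {b}. [:- \<kappa> a, 1:]) \<le> (\<Sum>a\<in>monics d - {b}. degree [:- \<kappa> a, 1:])"
      using degree_prod_sum_le[of "monics d - {b}" "\<lambda>a. [:- \<kappa> a, 1:]"] by (simp add: comp_def)
    also have "\<dots> = card (monics d :: 'a poly set) - 1"
      using \<open>b \<in> monics d\<close> by simp
    finally show "degree (\<Prod>a\<in>monics d - {b}. [:- \<kappa> a, 1:]) \<le> card (monics d :: 'a poly set) - 1" .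
  qed
  moreover have "CARD('a) ^ d > 0" by simp
  ultimately show ?thesis unfolding card_monics by linarith
qed

lemma Md_eqI:
  assumes "degree p < CARD('a) ^ d"
    and "\<And>b. b \<in> monics d \<Longrightarrow> poly p (\<kappa> b) = g b * \<kappa> (prod_nonzero_below d)"
  shows "Md \<kappa> d g = p"
  by (rule poly_eqI_degree[where A = "\<kappa> ` monics d"])
     (use assms in \<open>auto simp: Md_eval Md_degree card_image_monics\<close>)

lemma Md_one: "Md \<kappa> d (\<lambda>_. 1) = [:\<kappa> (prod_nonzero_below d):]"
  by (rule Md_eqI) simp_all

definition coordinate_poly :: "nat \<Rightarrow> nat \<Rightarrow> 'b poly" where
  "coordinate_poly d j = (\<Prod>w\<in>hyperplane d j. [:- \<kappa> (monom 1 d + w), 1:])"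

lemma degree_coordinate_poly:
  assumes "j < d"
  shows "degree (coordinate_poly d j) \<le> CARD('a) ^ d div CARD('a)"
proof -
  have "degree (coordinate_poly d j) \<le> card (hyperplane d j :: 'a poly set)"
    using degree_prod_sum_le[of "hyperplane d j" "\<lambda>w. [:- \<kappa> (monom 1 d + w), 1:]"]
    by (simp add: coordinate_poly_def comp_def)
  also have "\<dots> = CARD('a) ^ d div CARD('a)"
    using assms by (simp add: card_hyperplane power_diff)
  finally show ?thesis .
qed

lemma poly_coordinate_poly:
  assumes "j < d" and "v \<in> polys_below d"
  shows "poly (coordinate_poly d j) (\<kappa> (monom 1 d + v)) = \<kappa> [:coeff v j:] * \<kappa> (hyperplane_prod d j)"
proof -
  have "poly (coordinate_poly d j) (\<kappa> (monom 1 d + v)) = \<kappa> (\<Prod>w\<in>hyperplane d j. v - w)"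
    by (simp add: coordinate_poly_def poly_prod hom_prod flip: hom_diff)
  also have "\<dots> = \<kappa> [:coeff v j:] * \<kappa> (hyperplane_prod d j)"
    using assms by (simp only: prod_diff_hyperplane hom_mult)
  finally show ?thesis .
qed

end

lemma mult_power_div_less: "l < (q::nat) \<Longrightarrow> l * (q ^ d div q) < q ^ d"
  by (cases d) (auto simp: div_eq_0_iff)

lemma degree_prod_power_le:
  fixes p :: "'i \<Rightarrow> 'a::comm_semiring_1 poly"
  assumes "finite I"
  shows "degree (\<Prod>i\<in>I. p i ^ n i) \<le> (\<Sum>i\<in>I. n i * degree (p i))"
proof -
  have "degree (\<Prod>i\<in>I. p i ^ n i) \<le> (\<Sum>i\<in>I. degree (p i ^ n i))"
    using degree_prod_sum_le[OF assms, of "\<lambda>i. p i ^ n i"] by (simp add: comp_def)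
  also have "\<dots> \<le> (\<Sum>i\<in>I. n i * degree (p i))"
    by (intro sum_mono) (metis degree_power_le mult.commute)
  finally show ?thesis .
qed

text \<open>An \<open>\<F>\<^sub>q\<close>-linear \<open>h\<close> is interpolated on the monics of degree \<open>d\<close> by a polynomial of degree
  \<open>q\<^sup>d\<^sup>-\<^sup>1\<close>, namely \<open>h(X\<^sup>d)\<close> plus a combination of the coordinate polynomials. The bound is
  written \<open>q\<^sup>d div q\<close> so that it is \<open>0\<close> for \<open>d = 0\<close>.\<close>
lemma Md_degree_linear:
  fixes \<kappa> :: "'a::{finite,field} poly \<Rightarrow> 'k::field"
  assumes "Fq_embedding \<kappa>" and lin: "Fq_embedding.Fq_linear \<kappa> h"
  shows "degree (Md \<kappa> d h) \<le> CARD('a) ^ d div CARD('a)"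
proof -
  interpret Fq_embedding \<kappa> by fact
  define R where "R = [:h (monom 1 d):] +
    (\<Sum>j<d. smult (h (monom 1 j) / \<kappa> (hyperplane_prod d j)) (coordinate_poly d j))"
  have R_interpolates: "poly R (\<kappa> b) = h b" if "b \<in> monics d" for b
  proof -
    from that obtain v where v: "v \<in> polys_below d" and b: "b = monom 1 d + v"
      by (auto simp: monics_eq_translate_polys_below)
    have "poly R (\<kappa> b) = h (monom 1 d) + (\<Sum>j<d. \<kappa> [:coeff v j:] * h (monom 1 j))"
      using v by (simp add: R_def b poly_sum poly_coordinate_poly hyperplane_prod_nonzero mult.commute)
    also have "\<dots> = h b"
      using lin by (simp add: b Fq_linear_expand[OF lin v] Fq_linear_def)
    finally show ?thesis .
  qed
  have degree_R: "degree R \<le> CARD('a) ^ d div CARD('a)"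
    unfolding R_def
    by (intro degree_add_le degree_sum_le order.trans[OF degree_smult_le] degree_coordinate_poly) auto
  have "Md \<kappa> d h = smult (\<kappa> (prod_nonzero_below d)) R"
  proof (rule Md_eqI)
    have "CARD('a) ^ d div CARD('a) < CARD('a) ^ d"
      using mult_power_div_less[of 1 "CARD('a)" d] card_field_ge_2[where 'a='a] by simp
    with degree_R show "degree (smult (\<kappa> (prod_nonzero_below d)) R) < CARD('a) ^ d"
      by (meson degree_smult_le le_less_trans order.trans)
  qed (simp add: R_interpolates)
  thus ?thesis using degree_R by (simp add: prod_nonzero_below_nonzero)
qed

lemma Md_power_digits:
  fixes \<kappa> :: "'a::{finite,field} poly \<Rightarrow> 'k::field" and \<beta>s :: "nat \<Rightarrow> nat"
  assumes "Fq_embedding \<kappa>" and lin: "Fq_embedding.Fq_linear \<kappa> g"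
    and small: "(\<Sum>i\<le>e. \<beta>s i) < CARD('a)"
  shows "Md \<kappa> d (\<lambda>a. g a ^ (\<Sum>i\<le>e. \<beta>s i * CARD('a) ^ i)) =
    [:coeff (Md \<kappa> d (\<lambda>_. 1)) 0 powi (1 - int (\<Sum>i\<le>e. \<beta>s i)):] *
    (\<Prod>i\<le>e. Md \<kappa> d (\<lambda>a. g a ^ (CARD('a) ^ i)) ^ \<beta>s i)"
proof -
  interpret Fq_embedding \<kappa> by fact
  define q where "q = CARD('a)"
  define l where "l = (\<Sum>i\<le>e. \<beta>s i)"
  define c where "c = \<kappa> (prod_nonzero_below d)"
  define P where "P = (\<Prod>i\<le>e. Md \<kappa> d (\<lambda>a. g a ^ (q ^ i)) ^ \<beta>s i)"
  have c: "c \<noteq> 0" by (simp add: c_def prod_nonzero_below_nonzero)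
  have "degree P \<le> (\<Sum>i\<le>e. \<beta>s i * (q ^ d div q))"
    unfolding P_def q_def
    by (rule order.trans[OF degree_prod_power_le sum_mono])
       (simp_all add: Md_degree_linear[OF assms(1) Fq_linear_power_card_power[OF lin]])
  also have "\<dots> < q ^ d"
    using mult_power_div_less[OF small] by (simp add: l_def q_def flip: sum_distrib_right)
  finally have degree_P: "degree P < q ^ d" .
  have "Md \<kappa> d (\<lambda>a. g a ^ (\<Sum>i\<le>e. \<beta>s i * q ^ i)) = [:c powi (1 - int l):] * P"
  proof (rule Md_eqI)
    show "degree ([:c powi (1 - int l):] * P) < CARD('a) ^ d"
      using degree_P by (simp add: q_def)
  next
    fix b :: "'a poly"
    assume "b \<in> monics d"
    hence "poly P (\<kappa> b) = (\<Prod>i\<le>e. (g b ^ (q ^ i) * c) ^ \<beta>s i)"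
      by (simp add: P_def poly_prod Md_eval c_def)
    also have "\<dots> = g b ^ (\<Sum>i\<le>e. \<beta>s i * q ^ i) * c ^ l"
      by (simp add: l_def power_mult_distrib prod.distrib power_sum mult.commute flip: power_mult)
    finally have "poly ([:c powi (1 - int l):] * P) (\<kappa> b)
        = g b ^ (\<Sum>i\<le>e. \<beta>s i * q ^ i) * (c powi (1 - int l) * c powi int l)"
      by (simp add: mult_ac)
    also have "c powi (1 - int l) * c powi int l = c powi (1 - int l + int l)"
      by (rule power_int_add[symmetric]) (simp add: c)
    also have "\<dots> = c" by simp
    finally show "poly ([:c powi (1 - int l):] * P) (\<kappa> b)
        = g b ^ (\<Sum>i\<le>e. \<beta>s i * q ^ i) * \<kappa> (prod_nonzero_below d)"
      by (simp add: c_def)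
  qed
  thus ?thesis by (simp add: Md_one q_def l_def c_def P_def)
qed

lemma frac_emb_add: "frac_emb (x + y) = frac_emb x + frac_emb y"
  and frac_emb_mult: "frac_emb (x * y) = frac_emb x * frac_emb y"
  and frac_emb_one: "frac_emb 1 = 1"
  and frac_emb_eq_iff: "frac_emb x = frac_emb y \<longleftrightarrow> x = y"
  by (simp_all add: frac_emb_def One_fract_def eq_fract)

lemma frac_emb_power: "frac_emb (x ^ n) = frac_emb x ^ n"
  by (induction n) (simp_all add: frac_emb_mult frac_emb_one)

lemma poly_map_poly_frac_emb: "poly (map_poly frac_emb p) (frac_emb x) = frac_emb (poly p x)"
  by (induction p) (simp_all add: map_poly_pCons frac_emb_add frac_emb_mult frac_emb_def Zero_fract_def)

lemma Fq_embedding_frac_emb: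
  assumes "Fq_embedding \<iota>"
  shows "Fq_embedding (\<lambda>x. frac_emb (\<iota> x))"
proof -
  interpret Fq_embedding \<iota> by fact
  show ?thesis
    by unfold_locales (simp_all add: hom_add hom_mult hom_one inj_def frac_emb_add frac_emb_mult frac_emb_one
        frac_emb_eq_iff injD[OF inj])
qed

lemma map_poly_frac_emb_Md:
  assumes "Fq_embedding \<iota>"
  shows "map_poly frac_emb (Md \<iota> d g) = Md (\<lambda>x. frac_emb (\<iota> x)) d (\<lambda>a. frac_emb (g a))"
proof -
  interpret \<iota>: Fq_embedding \<iota> by fact
  interpret \<kappa>: Fq_embedding "\<lambda>x. frac_emb (\<iota> x)" using assms by (rule Fq_embedding_frac_emb)
  show ?thesis
  proof (rule \<kappa>.Md_eqI[symmetric])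
    have "degree (map_poly frac_emb (Md \<iota> d g)) = degree (Md \<iota> d g)"
      by (rule degree_map_poly) (simp add: frac_emb_def Zero_fract_def eq_fract)
    thus "degree (map_poly frac_emb (Md \<iota> d g)) < CARD('a) ^ d"
      using \<iota>.Md_degree by simp
  next
    fix b :: "'a poly"
    assume "b \<in> monics d"
    thus "poly (map_poly frac_emb (Md \<iota> d g)) (frac_emb (\<iota> b))
        = frac_emb (g b) * frac_emb (\<iota> (prod_nonzero_below d))"
      by (simp add: poly_map_poly_frac_emb \<iota>.Md_eval frac_emb_mult)
  qed
qed

theorem corollary4p1p14:
  fixes \<iota> :: "'a::{finite,field} poly \<Rightarrow> 'b::idom"
    and f :: "'a poly \<Rightarrow> 'b"
    and d e \<beta> :: nat
    and \<beta>s :: "nat \<Rightarrow> nat"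
  assumes iota_add: "\<And>x y. \<iota> (x + y) = \<iota> x + \<iota> y"
    and iota_mult: "\<And>x y. \<iota> (x * y) = \<iota> x * \<iota> y"
    and iota_one: "\<iota> 1 = 1"
    and iota_inj: "inj \<iota>"
    and f_add: "\<And>x y. f (x + y) = f x + f y"
    and f_smult: "\<And>c x. f (smult c x) = \<iota> [:c:] * f x"
    and digits: "\<And>i. i \<le> e \<Longrightarrow> \<beta>s i < CARD('a)"
    and expansion: "\<beta> = (\<Sum>i\<le>e. \<beta>s i * CARD('a) ^ i)"
    and small: "(\<Sum>i\<le>e. \<beta>s i) < CARD('a)"
  shows "map_poly frac_emb (Md \<iota> d (\<lambda>a. f a ^ \<beta>)) =
           [: frac_emb (coeff (Md \<iota> d (\<lambda>_. 1)) 0) powi (1 - int (\<Sum>i\<le>e. \<beta>s i)) :] *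
           (\<Prod>i\<le>e. (map_poly frac_emb (Md \<iota> d (\<lambda>a. f a ^ (CARD('a) ^ i)))) ^ \<beta>s i)"
proof -
  have \<iota>: "Fq_embedding \<iota>"
    using iota_add iota_mult iota_one iota_inj by unfold_locales
  interpret \<iota>: Fq_embedding \<iota> by (fact \<iota>)
  interpret \<kappa>: Fq_embedding "\<lambda>x. frac_emb (\<iota> x)" using \<iota> by (rule Fq_embedding_frac_emb)
  have "\<kappa>.Fq_linear (\<lambda>a. frac_emb (f a))"
    by (simp add: \<kappa>.Fq_linear_def f_add f_smult frac_emb_add frac_emb_mult)
  from Md_power_digits[OF \<kappa>.Fq_embedding_axioms this small]
  show ?thesis
    by (simp add: expansion map_poly_frac_emb_Md[OF \<iota>] \<iota>.Md_one \<kappa>.Md_one frac_emb_power)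
qed

end
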